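(* For all integers $n\ge0$, $$f(n,s,q)=\sum_{j=0}^n(-1)^j\begin{bmatrix} n\\ j\end{bmatrix}_q\frac{\prod_{i=0}^{j-1}(q^{2i+1}-s)}{(-q;q)_j},$$ $$F(2n,s,q)=\sum_{k=0}^n\begin{bmatrix} n\\ k\end{bmatrix}_{q^2}\frac{\prod_{j=0}^{2k-1}(q^j-s)}{(q;q^2)_k},\qquad F(2n+1,s,q)=\sum_{k=0}^n\begin{bmatrix} n\\ k\end{bmatrix}_{q^2}\frac{\prod_{j=0}^{2k}(q^j-s)}{(q;q^2)_{k+1}}.$$
   Context: $q$ is an indeterminate. $(x;q)_n=\prod_{j=0}^{n-1}(1-q^jx)$. The Gaussian binomial coefficient is $\begin{bmatrix} n\\ j\end{bmatrix}_q=\frac{(q;q)_n}{(q;q)_j(q;q)_{n-j}}$ for $0\le j\le n$ and $0$ otherwise. The normalized Rogers–Szegö polynomials are $f(n,s,q)=\dfrac{\sum_{j=0}^n s^j\begin{bmatrix} n\\ j\end{bmatrix}_{q^2}}{(-q;q)_n}$ and $F(n,s,q)=\dfrac{\sum_{j=0}^n(-s)^j\begin{bmatrix} n\\ j\end{bmatrix}_{q}}{(q;q^2)_{\lfloor (n+1)/2\rfloor}}$. *)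

theory Defs
  imports Main
begin

definition qpoch :: "'a::comm_ring_1 \<Rightarrow> 'a \<Rightarrow> nat \<Rightarrow> 'a" where
  "qpoch x q n = (\<Prod>j<n. (1 - q ^ j * x))"

definition gbinom :: "'a::field \<Rightarrow> nat \<Rightarrow> nat \<Rightarrow> 'a" where
  "gbinom q n j = (if j \<le> n then qpoch q q n / (qpoch q q j * qpoch q q (n - j)) else 0)"

definition rs_f :: "nat \<Rightarrow> 'a::field \<Rightarrow> 'a \<Rightarrow> 'a" where
  "rs_f n s q = (\<Sum>j\<le>n. s ^ j * gbinom (q^2) n j) / qpoch (- q) q n"

definition rs_F :: "nat \<Rightarrow> 'a::field \<Rightarrow> 'a \<Rightarrow> 'a" where
  "rs_F n s q = (\<Sum>j\<le>n. (- s) ^ j * gbinom q n j) / qpoch q (q^2) ((n + 1) div 2)"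

end

theory Submission
  imports Defs "HOL-Computational_Algebra.Formal_Power_Series"
begin

text \<open>Each side of the three identities is a coefficient of a product of formal power series in
  an auxiliary variable \<open>z\<close>. The \<open>q\<close>-exponential \<open>E\<^sub>c(x) = \<Sum>\<^sub>n x\<^sup>n z\<^sup>n / (c;c)\<^sub>n\<close> satisfies
  \<open>E\<^sub>c(x)(c z) = (1 - x z) E\<^sub>c(x)(z)\<close>, and since \<open>q\<close> is not a root of unity, a series \<open>h\<close> with
  \<open>h(c z) = P(z) h(z)\<close> and \<open>P(0) = 1\<close> is determined by \<open>h(0)\<close>.
  For \<open>f\<close>, the left side is read off from \<open>E\<^bsub>q\<^sup>2\<^esub>(s) E\<^bsub>q\<^sup>2\<^esub>(1)\<close> and the right side from \<open>G E\<^sub>q(1)\<close>,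
  where \<open>G\<close> has coefficients \<open>\<Prod>\<^bsub>i<j\<^esub> (s - q\<^bsup>2i+1\<^esup>) / (q\<^sup>2;q\<^sup>2)\<^sub>j\<close>; both products satisfy
  \<open>h(q\<^sup>2 z) = (1 - s z)(1 - z) h(z)\<close>.
  For \<open>F\<close>, the left side is read off from \<open>E\<^sub>q(-s) E\<^sub>q(1)\<close> and the right side from \<open>C(z) E\<^bsub>q\<^sup>2\<^esub>(1)(z\<^sup>2)\<close>,
  where \<open>C\<close> has coefficients \<open>\<Prod>\<^bsub>j<m\<^esub> (q\<^sup>j - s) / (q;q)\<^sub>m\<close>; both products satisfy
  \<open>h(q z) = (1 + s z)(1 - z) h(z)\<close>. Since \<open>E\<^bsub>q\<^sup>2\<^esub>(1)(z\<^sup>2)\<close> is even, the even and the odd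
  coefficients of \<open>C(z) E\<^bsub>q\<^sup>2\<^esub>(1)(z\<^sup>2)\<close> give the two formulas for \<open>F\<close>.\<close>

unbundle fps_syntax

lemma qpoch_0 [simp]: "qpoch x q 0 = 1"
  by (simp add: qpoch_def)

lemma qpoch_Suc: "qpoch x q (Suc n) = qpoch x q n * (1 - q ^ n * x)"
  by (simp add: qpoch_def)

lemma qpoch_nonzero:
  fixes x q :: "'a::idom"
  assumes "\<And>j. j < n \<Longrightarrow> q ^ j * x \<noteq> 1"
  shows "qpoch x q n \<noteq> 0"
  using assms by (simp add: qpoch_def)

lemma qpoch_neg_mult_qpoch: "qpoch (- x) q n * qpoch x q n = qpoch (x^2) (q^2) n"
proof (induction n)
  case (Suc n)
  have "qpoch (- x) q (Suc n) * qpoch x q (Suc n)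
      = qpoch (- x) q n * qpoch x q n * ((1 - q^n * (- x)) * (1 - q^n * x))"
    by (simp add: qpoch_Suc mult_ac)
  also have "(1 - q^n * (- x)) * (1 - q^n * x) = 1 - (q^2)^n * x^2"
    by (simp add: algebra_simps power2_eq_square power_mult_distrib)
  finally show ?case
    by (simp add: Suc.IH qpoch_Suc)
qed simp

lemma qpoch_double:
  "qpoch x q (2*k) = qpoch x (q^2) k * qpoch (q*x) (q^2) k"
proof (induction k)
  case (Suc k)
  have pow: "q^(2*k) = (q^2)^k" "q^(Suc (2*k)) * x = (q^2)^k * (q*x)"
    by (simp only: power_mult) (simp only: power_Suc power_mult mult.assoc mult.left_commute)
  have "qpoch x q (2 * Suc k) = qpoch x q (2*k) * (1 - q^(2*k) * x) * (1 - q^(Suc (2*k)) * x)"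
    by (simp add: qpoch_Suc)
  also have "\<dots> = qpoch x q (2*k) * (1 - (q^2)^k * x) * (1 - (q^2)^k * (q*x))"
    unfolding pow ..
  also have "qpoch x q (2*k) = qpoch x (q^2) k * qpoch (q*x) (q^2) k"
    by (rule Suc.IH)
  finally show ?case
    by (simp add: qpoch_Suc mult_ac)
qed simp

lemma qpoch_double_Suc:
  "qpoch x q (2*k+1) = qpoch x (q^2) (Suc k) * qpoch (q*x) (q^2) k"
proof -
  have "qpoch x q (2*k+1) = qpoch x q (2*k) * (1 - (q^2)^k * x)"
    by (simp add: qpoch_Suc power_mult)
  also have "qpoch x q (2*k) = qpoch x (q^2) k * qpoch (q*x) (q^2) k"
    by (rule qpoch_double)
  finally show ?thesis
    by (simp add: qpoch_Suc mult_ac)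
qed

lemma qpoch_q_q_double: "qpoch q q (2*k) = qpoch q (q^2) k * qpoch (q^2) (q^2) k"
  using qpoch_double[of q q k] by (simp add: power2_eq_square)

lemma qpoch_q_q_double_Suc: "qpoch q q (2*k+1) = qpoch q (q^2) (Suc k) * qpoch (q^2) (q^2) k"
  using qpoch_double_Suc[of q q k] by (simp add: power2_eq_square)

definition fps_dilate :: "'a::comm_ring_1 \<Rightarrow> 'a fps \<Rightarrow> 'a fps" where
  "fps_dilate c f = f oo (fps_const c * fps_X)"

lemma fps_dilate_nth [simp]: "fps_dilate c f $ n = c ^ n * f $ n"
  by (simp add: fps_dilate_def)

lemma fps_dilate_mult:
  fixes f g :: "'a::idom fps"
  shows "fps_dilate c (f * g) = fps_dilate c f * fps_dilate c g"
  by (simp add: fps_dilate_def fps_compose_mult_distrib)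

lemma fps_dilate_dilate: "fps_dilate a (fps_dilate b f) = fps_dilate (a * b) f"
  by (rule fps_ext) (simp add: power_mult_distrib)

lemma fps_dilate_linear:
  "fps_dilate c (1 - fps_const a * fps_X) = 1 - fps_const (a * c) * fps_X"
  by (rule fps_ext) (auto simp: fps_X_def)

lemma fps_dilate_eqI_coeff_recurrence:
  fixes f :: "'a::comm_ring_1 fps"
  assumes rec: "\<And>m. f $ Suc m * (1 - c ^ Suc m) = (b - a * c ^ m) * f $ m"
  shows "(1 - fps_const a * fps_X) * fps_dilate c f = (1 - fps_const b * fps_X) * f"
proof (rule fps_ext)
  fix n
  show "((1 - fps_const a * fps_X) * fps_dilate c f) $ n = ((1 - fps_const b * fps_X) * f) $ n"
  proof (cases n)
    case (Suc m)
    then show ?thesis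
      using rec[of m] by (simp add: algebra_simps)
  qed simp
qed

text \<open>Comparing \<open>z\<^sup>n\<close>-coefficients expresses \<open>(c\<^sup>n - 1) f\<^sub>n\<close> through lower coefficients.\<close>

lemma fps_dilate_eq_mult_unique:
  fixes f g P :: "'a::idom fps"
  assumes f: "fps_dilate c f = P * f" and g: "fps_dilate c g = P * g"
    and P0: "P $ 0 = 1" and fg0: "f $ 0 = g $ 0"
    and c: "\<And>n. n > 0 \<Longrightarrow> c ^ n \<noteq> 1"
  shows "f = g"
proof -
  define h where "h = f - g"
  have h: "fps_dilate c h = P * h"
    using f g by (simp add: h_def fps_eq_iff fps_mult_nth algebra_simps sum_subtractf)
  have "h $ n = 0" for n
  proof (induction n rule: less_induct)
    case (less n)
    show ?case
    proof (cases n)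
      case 0
      with fg0 show ?thesis by (simp add: h_def)
    next
      case (Suc m)
      have "(P * h) $ n = P $ 0 * h $ n + (\<Sum>i=1..n. P $ i * h $ (n - i))"
        using Suc by (simp add: fps_mult_nth sum.atLeast_Suc_atMost)
      also have "(\<Sum>i=1..n. P $ i * h $ (n - i)) = 0"
        by (rule sum.neutral) (use less Suc in auto)
      finally have "c ^ n * h $ n = h $ n"
        using h P0 by (metis add_0_right mult_1 fps_dilate_nth)
      then have "(c ^ n - 1) * h $ n = 0"
        by (simp add: algebra_simps)
      moreover have "c ^ n - 1 \<noteq> 0"
        using c[of n] Suc by simp
      ultimately show ?thesis by simp
    qed
  qed
  then show ?thesis
    by (simp add: h_def fps_eq_iff)
qed

lemma fps_dilate_eqI_qpoch_denominators:
  fixes c :: "'a::field"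
  assumes nz: "\<And>n. qpoch c c n \<noteq> 0"
    and rec: "\<And>m. t (Suc m) = (b - a * c ^ m) * t m"
  shows "(1 - fps_const a * fps_X) * fps_dilate c (Abs_fps (\<lambda>m. t m / qpoch c c m))
    = (1 - fps_const b * fps_X) * Abs_fps (\<lambda>m. t m / qpoch c c m)"
proof (rule fps_dilate_eqI_coeff_recurrence)
  fix m
  have "qpoch c c (Suc m) = qpoch c c m * (1 - c ^ Suc m)"
    by (simp add: qpoch_Suc mult.commute)
  with nz[of m] nz[of "Suc m"]
  show "Abs_fps (\<lambda>m. t m / qpoch c c m) $ Suc m * (1 - c ^ Suc m)
      = (b - a * c ^ m) * Abs_fps (\<lambda>m. t m / qpoch c c m) $ m"
    by (simp add: rec)
qed

definition qexp_fps :: "'a::field \<Rightarrow> 'a \<Rightarrow> 'a fps" where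
  "qexp_fps c x = Abs_fps (\<lambda>n. x ^ n / qpoch c c n)"

lemma qexp_fps_dilate:
  fixes c x :: "'a::field"
  assumes "\<And>n. qpoch c c n \<noteq> 0"
  shows "fps_dilate c (qexp_fps c x) = (1 - fps_const x * fps_X) * qexp_fps c x"
  using fps_dilate_eqI_qpoch_denominators[of c "\<lambda>n. x ^ n" x 0] assms
  by (simp add: qexp_fps_def)

lemma gbinom_convolution:
  fixes c :: "'a::field"
  assumes nz: "\<And>m. qpoch c c m \<noteq> 0"
  shows "(\<Sum>j\<le>n. gbinom c n j * (a j * b (n - j)))
    = qpoch c c n * (Abs_fps (\<lambda>j. a j / qpoch c c j) * Abs_fps (\<lambda>j. b j / qpoch c c j)) $ n"
proof -
  have "(\<Sum>j\<le>n. gbinom c n j * (a j * b (n - j)))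
      = (\<Sum>j\<le>n. qpoch c c n * (a j / qpoch c c j * (b (n - j) / qpoch c c (n - j))))"
    by (rule sum.cong) (use nz in \<open>auto simp: gbinom_def\<close>)
  then show ?thesis
    by (simp add: fps_mult_nth atLeast0AtMost sum_distrib_left)
qed

text \<open>The sum is padded to the odd length \<open>2N + 2\<close> so that it can be taken in pairs.\<close>

lemma fps_mult_nth_double_odd_coeffs_zero:
  fixes f g :: "'a::comm_semiring_1 fps"
  assumes odd0: "\<And>k. g $ (2*k+1) = 0"
  shows "(f * g) $ (2*N) = (\<Sum>k\<le>N. f $ (2*k) * g $ (2*(N-k)))"
proof -
  have "(f * g) $ (2*N) = (\<Sum>i\<le>Suc (2*N). if i \<le> 2*N then f $ i * g $ (2*N - i) else 0)"
    by (simp add: fps_mult_nth atLeast0AtMost)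
  also have "\<dots> = (\<Sum>k\<le>N. f $ (2*k) * g $ (2*(N-k)))"
    unfolding sum.in_pairs_0
  proof (rule sum.cong)
    fix k assume "k \<in> {..N}"
    moreover have "g $ (2*N - Suc (2*k)) = 0" if "k < N"
    proof -
      from that have "2*N - Suc (2*k) = 2*(N - Suc k) + 1" by simp
      then show ?thesis by (simp only: odd0)
    qed
    ultimately show "(if 2*k \<le> 2*N then f $ (2*k) * g $ (2*N - 2*k) else 0)
      + (if Suc (2*k) \<le> 2*N then f $ Suc (2*k) * g $ (2*N - Suc (2*k)) else 0)
      = f $ (2*k) * g $ (2*(N-k))"
      by (auto simp: diff_mult_distrib2)
  qed simp
  finally show ?thesis .
qed

lemma fps_mult_nth_double_Suc_odd_coeffs_zero:
  fixes f g :: "'a::comm_semiring_1 fps"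
  assumes odd0: "\<And>k. g $ (2*k+1) = 0"
  shows "(f * g) $ (2*N+1) = (\<Sum>k\<le>N. f $ (2*k+1) * g $ (2*(N-k)))"
proof -
  have "(f * g) $ (2*N+1) = (\<Sum>i\<le>Suc (2*N). f $ i * g $ (Suc (2*N) - i))"
    by (simp add: fps_mult_nth atLeast0AtMost)
  also have "\<dots> = (\<Sum>k\<le>N. f $ (2*k+1) * g $ (2*(N-k)))"
    unfolding sum.in_pairs_0
  proof (rule sum.cong)
    fix k assume "k \<in> {..N}"
    then have "Suc (2*N) - 2*k = 2*(N-k) + 1" "Suc (2*N) - Suc (2*k) = 2*(N-k)"
      by auto
    then show "f $ (2*k) * g $ (Suc (2*N) - 2*k) + f $ Suc (2*k) * g $ (Suc (2*N) - Suc (2*k))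
      = f $ (2*k+1) * g $ (2*(N-k))"
      using odd0[of "N-k"] by simp
  qed simp
  finally show ?thesis .
qed

definition rs_f_kernel_fps :: "'a::field \<Rightarrow> 'a \<Rightarrow> 'a fps" where
  "rs_f_kernel_fps q s = Abs_fps (\<lambda>j. (\<Prod>i<j. s - q ^ (2*i+1)) / qpoch (q^2) (q^2) j)"

definition rs_F_kernel_fps :: "'a::field \<Rightarrow> 'a \<Rightarrow> 'a fps" where
  "rs_F_kernel_fps q s = Abs_fps (\<lambda>m. (\<Prod>j<m. q ^ j - s) / qpoch q q m)"

text \<open>\<open>qexp_fps (q\<^sup>2) 1\<close> evaluated at \<open>z\<^sup>2\<close>.\<close>

definition even_qexp_fps :: "'a::field \<Rightarrow> 'a fps" where
  "even_qexp_fps q = Abs_fps (\<lambda>m. if even m then 1 / qpoch (q^2) (q^2) (m div 2) else 0)"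

lemma even_qexp_fps_nth_odd: "even_qexp_fps q $ (2*k+1) = 0"
  by (simp add: even_qexp_fps_def)

context
  fixes q :: "'a::field"
  assumes generic: "\<And>m. m > 0 \<Longrightarrow> q ^ m \<noteq> 1"
begin

lemma qpoch_q_q_nonzero: "qpoch q q n \<noteq> 0"
  by (rule qpoch_nonzero) (use generic[of "Suc j" for j] in \<open>auto simp: mult.commute\<close>)

lemma qpoch_q_sq_nonzero: "qpoch q (q^2) n \<noteq> 0"
proof (rule qpoch_nonzero)
  fix j
  have "(q^2) ^ j * q = q ^ (2*j+1)"
    by (simp add: power_add power_mult)
  then show "(q^2) ^ j * q \<noteq> 1"
    by (simp only:) (rule generic, simp)
qed

lemma qpoch_sq_sq_nonzero: "qpoch (q^2) (q^2) n \<noteq> 0"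
proof (rule qpoch_nonzero)
  fix j
  have "(q^2) ^ j * q^2 = q ^ (2*j+2)"
    by (simp only: power_add power_mult)
  then show "(q^2) ^ j * q^2 \<noteq> 1"
    by (simp only:) (rule generic, simp)
qed

lemma qpoch_neg_q_nonzero: "qpoch (- q) q n \<noteq> 0"
  using qpoch_neg_mult_qpoch[of q q n] qpoch_sq_sq_nonzero[of n] by auto

lemma q_sq_power_neq_1: "n > 0 \<Longrightarrow> (q^2) ^ n \<noteq> 1"
  using generic[of "2*n"] by (simp add: power_mult)

lemma rs_f_kernel_fps_dilate:
  "(1 - fps_const q * fps_X) * fps_dilate (q^2) (rs_f_kernel_fps q s)
     = (1 - fps_const s * fps_X) * rs_f_kernel_fps q s"
  unfolding rs_f_kernel_fps_def
proof (rule fps_dilate_eqI_qpoch_denominators[OF qpoch_sq_sq_nonzero])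
  fix m
  have "q ^ (2*m+1) = q * (q^2) ^ m"
    by (simp add: power_add power_mult)
  then show "(\<Prod>i<Suc m. s - q ^ (2*i+1)) = (s - q * (q^2) ^ m) * (\<Prod>i<m. s - q ^ (2*i+1))"
    by simp
qed

lemma rs_F_kernel_fps_dilate:
  "(1 + fps_X) * fps_dilate q (rs_F_kernel_fps q s) = (1 + fps_const s * fps_X) * rs_F_kernel_fps q s"
proof -
  have "(1 - fps_const (- 1) * fps_X) * fps_dilate q (rs_F_kernel_fps q s)
      = (1 - fps_const (- s) * fps_X) * rs_F_kernel_fps q s"
    unfolding rs_F_kernel_fps_def
    by (rule fps_dilate_eqI_qpoch_denominators[OF qpoch_q_q_nonzero]) simp
  then show ?thesis
    by (simp flip: fps_const_neg)
qed

lemma even_qexp_fps_dilate: "fps_dilate q (even_qexp_fps q) = (1 - fps_X^2) * even_qexp_fps q"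
proof (rule fps_ext)
  fix n
  consider "n < 2" | k where "n = Suc (Suc k)"
    by (metis less_2_cases_iff nat.exhaust)
  then show "fps_dilate q (even_qexp_fps q) $ n = ((1 - fps_X^2) * even_qexp_fps q) $ n"
  proof cases
    case 1
    then show ?thesis
      by (auto simp: even_qexp_fps_def fps_X_power_mult_nth less_2_cases_iff algebra_simps)
  next
    case 2
    then have rhs: "((1 - fps_X^2) * even_qexp_fps q) $ n = even_qexp_fps q $ n - even_qexp_fps q $ k"
      using fps_X_power_mult_nth[of 2 "even_qexp_fps q" n] by (simp add: algebra_simps)
    show ?thesis
    proof (cases "even k")
      case True
      then obtain j where j: "k = 2*j" by auto
      have "qpoch (q^2) (q^2) (Suc j) = qpoch (q^2) (q^2) j * (1 - (q^2) ^ Suc j)"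
        by (simp add: qpoch_Suc mult.commute)
      moreover have "q ^ n = (q^2) ^ Suc j"
      proof -
        have "n = 2 * Suc j" using 2 j by simp
        then show ?thesis by (simp only: power_mult)
      qed
      ultimately show ?thesis
        unfolding rhs using 2 j qpoch_sq_sq_nonzero[of j] qpoch_sq_sq_nonzero[of "Suc j"]
        by (simp add: even_qexp_fps_def field_simps)
    next
      case False
      then show ?thesis
        unfolding rhs using 2 by (simp add: even_qexp_fps_def)
    qed
  qed
qed

lemma rs_f_generating_function:
  "rs_f_kernel_fps q s * qexp_fps q 1 = qexp_fps (q^2) s * qexp_fps (q^2) 1"
proof (rule fps_dilate_eq_mult_unique)
  let ?P = "(1 - fps_const s * fps_X) * (1 - fps_X)"
  have "fps_dilate q (qexp_fps q 1) = (1 - fps_X) * qexp_fps q 1"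
    using qexp_fps_dilate[OF qpoch_q_q_nonzero, of 1] by simp
  moreover have "fps_dilate q (1 - fps_X) = 1 - fps_const q * fps_X"
    using fps_dilate_linear[of q 1] by simp
  ultimately have "fps_dilate q (fps_dilate q (qexp_fps q 1))
      = (1 - fps_const q * fps_X) * ((1 - fps_X) * qexp_fps q 1)"
    by (simp add: fps_dilate_mult)
  then have "fps_dilate (q^2) (qexp_fps q 1) = (1 - fps_const q * fps_X) * ((1 - fps_X) * qexp_fps q 1)"
    by (simp add: fps_dilate_dilate power2_eq_square)
  then show "fps_dilate (q^2) (rs_f_kernel_fps q s * qexp_fps q 1) = ?P * (rs_f_kernel_fps q s * qexp_fps q 1)"
    using rs_f_kernel_fps_dilate by (simp add: fps_dilate_mult mult_ac)
  show "fps_dilate (q^2) (qexp_fps (q^2) s * qexp_fps (q^2) 1) = ?P * (qexp_fps (q^2) s * qexp_fps (q^2) 1)"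
    by (simp add: fps_dilate_mult qexp_fps_dilate qpoch_sq_sq_nonzero mult_ac)
qed (simp_all add: rs_f_kernel_fps_def qexp_fps_def q_sq_power_neq_1)

lemma rs_F_generating_function:
  "rs_F_kernel_fps q s * even_qexp_fps q = qexp_fps q (- s) * qexp_fps q 1"
proof (rule fps_dilate_eq_mult_unique)
  let ?P = "(1 + fps_const s * fps_X) * (1 - fps_X)"
  \<comment> \<open>Dilation multiplies the even factor by \<open>1 - z\<^sup>2\<close>, and the kernel only up to a factor \<open>1 + z\<close>.\<close>
  have "(1 + fps_X) * fps_dilate q (rs_F_kernel_fps q s * even_qexp_fps q)
      = (1 + fps_X) * (?P * (rs_F_kernel_fps q s * even_qexp_fps q))"
    unfolding fps_dilate_mult even_qexp_fps_dilate
    using rs_F_kernel_fps_dilate[of s]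
    by (simp add: power2_eq_square algebra_simps)
  moreover have "(1 + fps_X :: 'a fps) \<noteq> 0"
  proof
    assume "(1 + fps_X :: 'a fps) = 0"
    then have "(1 + fps_X :: 'a fps) $ 0 = 0" by simp
    then show False by simp
  qed
  ultimately show "fps_dilate q (rs_F_kernel_fps q s * even_qexp_fps q) = ?P * (rs_F_kernel_fps q s * even_qexp_fps q)"
    by simp
  show "fps_dilate q (qexp_fps q (- s) * qexp_fps q 1) = ?P * (qexp_fps q (- s) * qexp_fps q 1)"
    by (simp add: fps_dilate_mult qexp_fps_dilate qpoch_q_q_nonzero mult_ac flip: fps_const_neg)
qed (simp_all add: rs_F_kernel_fps_def even_qexp_fps_def qexp_fps_def generic)

lemma rs_f_expansion:
  "rs_f n s q = (\<Sum>j\<le>n. (-1) ^ j * gbinom q n j * (\<Prod>i<j. q ^ (2*i+1) - s) / qpoch (- q) q j)"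
proof -
  have lhs: "(\<Sum>j\<le>n. s ^ j * gbinom (q^2) n j)
      = qpoch (q^2) (q^2) n * (qexp_fps (q^2) s * qexp_fps (q^2) 1) $ n"
    using gbinom_convolution[OF qpoch_sq_sq_nonzero, of n "\<lambda>j. s ^ j" "\<lambda>_. 1"]
    by (simp add: qexp_fps_def mult.commute)
  have sign: "(-1) ^ j * (\<Prod>i<j. q ^ (2*i+1) - s) = (\<Prod>i<j. s - q ^ (2*i+1))" for j
    using prod_uminus[of "\<lambda>i. q ^ (2*i+1) - s" "{..<j}"] by simp
  have "(\<Sum>j\<le>n. (-1) ^ j * gbinom q n j * (\<Prod>i<j. q ^ (2*i+1) - s) / qpoch (- q) q j)
      = (\<Sum>j\<le>n. gbinom q n j * ((\<Prod>i<j. s - q ^ (2*i+1)) / qpoch (- q) q j * 1))"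
    by (rule sum.cong[OF refl])
      (metis (no_types, lifting) sign mult.left_commute mult.right_neutral times_divide_eq_right)
  also have "\<dots> = qpoch q q n * (rs_f_kernel_fps q s * qexp_fps q 1) $ n"
    using gbinom_convolution[OF qpoch_q_q_nonzero, of n
        "\<lambda>j. (\<Prod>i<j. s - q ^ (2*i+1)) / qpoch (- q) q j" "\<lambda>_. 1"]
    by (simp add: rs_f_kernel_fps_def qexp_fps_def qpoch_neg_mult_qpoch)
  also have "\<dots> = qpoch q q n * (qexp_fps (q^2) s * qexp_fps (q^2) 1) $ n"
    by (simp add: rs_f_generating_function)
  finally show ?thesis
    using qpoch_neg_q_nonzero[of n]
    by (simp add: rs_f_def lhs flip: qpoch_neg_mult_qpoch)
qed

lemma rs_F_numerator_eq_coeff: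
  "(\<Sum>j\<le>m. (- s) ^ j * gbinom q m j) = qpoch q q m * (qexp_fps q (- s) * qexp_fps q 1) $ m"
  using gbinom_convolution[OF qpoch_q_q_nonzero, of m "\<lambda>j. (- s) ^ j" "\<lambda>_. 1"]
  by (simp add: qexp_fps_def mult.commute)

lemma rs_F_even_expansion:
  "rs_F (2*n) s q = (\<Sum>k\<le>n. gbinom (q^2) n k * (\<Prod>j<2*k. q ^ j - s) / qpoch q (q^2) k)"
proof -
  have "rs_F (2*n) s q = qpoch q q (2*n) * (rs_F_kernel_fps q s * even_qexp_fps q) $ (2*n) / qpoch q (q^2) n"
    by (simp add: rs_F_def rs_F_numerator_eq_coeff rs_F_generating_function)
  also have "\<dots> = qpoch (q^2) (q^2) n * (rs_F_kernel_fps q s * even_qexp_fps q) $ (2*n)"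
    unfolding qpoch_q_q_double using qpoch_q_sq_nonzero[of n] by simp
  also have "\<dots> = (\<Sum>k\<le>n. qpoch (q^2) (q^2) n *
      (rs_F_kernel_fps q s $ (2*k) * even_qexp_fps q $ (2*(n-k))))"
    by (simp only: fps_mult_nth_double_odd_coeffs_zero[OF even_qexp_fps_nth_odd] sum_distrib_left)
  also have "\<dots> = (\<Sum>k\<le>n. gbinom (q^2) n k * (\<Prod>j<2*k. q ^ j - s) / qpoch q (q^2) k)"
  proof (rule sum.cong[OF refl])
    fix k assume "k \<in> {..n}"
    then show "qpoch (q^2) (q^2) n * (rs_F_kernel_fps q s $ (2*k) * even_qexp_fps q $ (2*(n-k)))
        = gbinom (q^2) n k * (\<Prod>j<2*k. q ^ j - s) / qpoch q (q^2) k"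
      unfolding gbinom_def rs_F_kernel_fps_def even_qexp_fps_def fps_nth_Abs_fps qpoch_q_q_double
      using qpoch_q_sq_nonzero qpoch_sq_sq_nonzero by simp
  qed
  finally show ?thesis .
qed

lemma rs_F_odd_expansion:
  "rs_F (2*n+1) s q = (\<Sum>k\<le>n. gbinom (q^2) n k * (\<Prod>j<2*k+1. q ^ j - s) / qpoch q (q^2) (k+1))"
proof -
  have "rs_F (2*n+1) s q
      = qpoch q q (2*n+1) * (rs_F_kernel_fps q s * even_qexp_fps q) $ (2*n+1) / qpoch q (q^2) (Suc n)"
    by (simp add: rs_F_def rs_F_numerator_eq_coeff rs_F_generating_function)
  also have "\<dots> = qpoch (q^2) (q^2) n * (rs_F_kernel_fps q s * even_qexp_fps q) $ (2*n+1)"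
    unfolding qpoch_q_q_double_Suc using qpoch_q_sq_nonzero[of "Suc n"] by simp
  also have "\<dots> = (\<Sum>k\<le>n. qpoch (q^2) (q^2) n *
      (rs_F_kernel_fps q s $ (2*k+1) * even_qexp_fps q $ (2*(n-k))))"
    by (simp only: fps_mult_nth_double_Suc_odd_coeffs_zero[OF even_qexp_fps_nth_odd] sum_distrib_left)
  also have "\<dots> = (\<Sum>k\<le>n. gbinom (q^2) n k * (\<Prod>j<2*k+1. q ^ j - s) / qpoch q (q^2) (k+1))"
  proof (rule sum.cong[OF refl])
    fix k assume "k \<in> {..n}"
    then show "qpoch (q^2) (q^2) n * (rs_F_kernel_fps q s $ (2*k+1) * even_qexp_fps q $ (2*(n-k)))
        = gbinom (q^2) n k * (\<Prod>j<2*k+1. q ^ j - s) / qpoch q (q^2) (k+1)"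
      unfolding gbinom_def rs_F_kernel_fps_def even_qexp_fps_def fps_nth_Abs_fps qpoch_q_q_double_Suc
      using qpoch_q_sq_nonzero qpoch_sq_sq_nonzero by simp
  qed
  finally show ?thesis .
qed

end

theorem theorem2p1:
  fixes q s :: "'a::field" and n :: nat
  assumes generic: "\<forall>m::nat. m > 0 \<longrightarrow> q ^ m \<noteq> 1"
  shows "(rs_f n s q =
           (\<Sum>j\<le>n. (-1) ^ j * gbinom q n j * (\<Prod>i<j. (q ^ (2*i+1) - s)) / qpoch (- q) q j)) \<and>
         (rs_F (2*n) s q =
           (\<Sum>k\<le>n. gbinom (q^2) n k * (\<Prod>j<2*k. (q ^ j - s)) / qpoch q (q^2) k)) \<and>
         (rs_F (2*n+1) s q =
           (\<Sum>k\<le>n. gbinom (q^2) n k * (\<Prod>j<2*k+1. (q ^ j - s)) / qpoch q (q^2) (k+1)))"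
proof -
  from generic have g: "\<And>m. m > 0 \<Longrightarrow> q ^ m \<noteq> 1"
    by blast
  show ?thesis
    by (intro conjI rs_f_expansion[OF g] rs_F_even_expansion[OF g] rs_F_odd_expansion[OF g])
qed

end
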